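(* In the setting of the context, assume $V_h^\pi(s)\ge\frac34(H-h+1)$ for $s\in\overline{\mathcal S}$ and $V_h^\pi(s)\le\frac14(H-h+1)$ for $s\in\underline{\mathcal S}$ (all $h=1,\dots,H$), that $\phi(s,a)^\top\mathbf x\ge0$ for all $(s,a)\in\mathcal X$, and that $\widetilde p$ is a transition kernel. Let $\widetilde\nu_h^\pi:=\widetilde{\mathbb E}^\pi[\phi(s_h,a_h)\mid s_0\sim\xi_0]$ for $h=0,\dots,H-1$, where $\widetilde{\mathbb E}^\pi$ is expectation along target-policy trajectories under $\widetilde p$, and let $\widetilde v^\pi$ be the value of $\pi$ under $(\widetilde p,r)$. Then $$v^\pi-\widetilde v^\pi\ge\frac12\bar p\underline p\Big(\sum_{h=0}^{H-1}(H-h)\widetilde\nu_h^\pi\Big)^\top\mathbf x.$$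
   Context: MDP $(p,r)$ with $\mathcal X=\mathcal S\times\mathcal A$, mean reward $r$, target policy $\pi$, horizon $H$, initial distribution $\xi_0$; $v^\pi=\mathbb E^\pi[\sum_{h=0}^Hr(s_h,a_h)\mid s_0\sim\xi_0]$, $Q_h^\pi(s,a)=\mathbb E^\pi[\sum_{h'=h}^Hr(s_{h'},a_{h'})\mid s_h=s,a_h=a]$, $V_h^\pi(s)=\int Q_h^\pi(s,a)\pi(a\mid s)da$. $\phi:\mathcal X\to\mathbb R^d$, $\bar\pi$ a deterministic behavior policy, $\overline{\mathcal S},\underline{\mathcal S}\subseteq\mathcal S$ disjoint, $\bar p:=\int_{\overline{\mathcal S}}\min_{s\in\mathcal S}p(s'\mid s,\bar\pi(s))ds'$, $\underline p:=\int_{\underline{\mathcal S}}\min_{s\in\mathcal S}p(s'\mid s,\bar\pi(s))ds'$. For $\mathbf x\in\mathbb R^d$, $\Delta q(s'):=\mathbf x\cdot\min_{s\in\mathcal S}p(s'\mid s,\bar\pi(s))\cdot(\underline p\,\mathbb 1_{\overline{\mathcal S}}(s')-\bar p\,\mathbb 1_{\underline{\mathcal S}}(s'))$ and $\widetilde p(s'\mid s,a):=p(s'\mid s,a)-\phi(s,a)^\top\Delta q(s')$. *)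

theory Defs
  imports "HOL-Analysis.Analysis"
begin

text \<open>Transition kernels and policies are given by densities w.r.t. reference
  measures: M on states (ds') and A on actions (da).
  Convention: p s a s' = p(s' | s, a), pol s a = pi(a | s).\<close>

text \<open>Value with k remaining steps: Vrem k = V_{H+1-k}; Vrem 0 = 0 (= V_{H+1}).\<close>
fun Vrem :: "'s measure \<Rightarrow> 'a measure \<Rightarrow> ('s \<Rightarrow> 'a \<Rightarrow> 's \<Rightarrow> real) \<Rightarrow> ('s \<Rightarrow> 'a \<Rightarrow> real)
    \<Rightarrow> ('s \<Rightarrow> 'a \<Rightarrow> real) \<Rightarrow> nat \<Rightarrow> 's \<Rightarrow> real" where
  "Vrem M A p r pol 0 s = 0"
| "Vrem M A p r pol (Suc k) s =
     (\<integral>a. pol s a * (r s a + (\<integral>s'. p s a s' * Vrem M A p r pol k s' \<partial>M)) \<partial>A)"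

definition Vfun :: "'s measure \<Rightarrow> 'a measure \<Rightarrow> ('s \<Rightarrow> 'a \<Rightarrow> 's \<Rightarrow> real) \<Rightarrow> ('s \<Rightarrow> 'a \<Rightarrow> real)
    \<Rightarrow> ('s \<Rightarrow> 'a \<Rightarrow> real) \<Rightarrow> nat \<Rightarrow> nat \<Rightarrow> 's \<Rightarrow> real" where
  "Vfun M A p r pol H h s = Vrem M A p r pol (Suc H - h) s"

text \<open>v^pi = E[sum_{h=0}^H r(s_h,a_h) | s_0 ~ xi0] (xi0 a density w.r.t. M).\<close>
definition pol_value :: "'s measure \<Rightarrow> 'a measure \<Rightarrow> ('s \<Rightarrow> 'a \<Rightarrow> 's \<Rightarrow> real) \<Rightarrow> ('s \<Rightarrow> 'a \<Rightarrow> real)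
    \<Rightarrow> ('s \<Rightarrow> 'a \<Rightarrow> real) \<Rightarrow> ('s \<Rightarrow> real) \<Rightarrow> nat \<Rightarrow> real" where
  "pol_value M A p r pol xi0 H = (\<integral>s. xi0 s * Vfun M A p r pol H 0 s \<partial>M)"

text \<open>Density of s_h along trajectories of pol under kernel p, s_0 ~ xi0.\<close>
fun sdist :: "'s measure \<Rightarrow> 'a measure \<Rightarrow> ('s \<Rightarrow> 'a \<Rightarrow> 's \<Rightarrow> real) \<Rightarrow> ('s \<Rightarrow> 'a \<Rightarrow> real)
    \<Rightarrow> ('s \<Rightarrow> real) \<Rightarrow> nat \<Rightarrow> 's \<Rightarrow> real" where
  "sdist M A p pol xi0 0 s = xi0 s"
| "sdist M A p pol xi0 (Suc h) s' =
     (\<integral>s. (\<integral>a. sdist M A p pol xi0 h s * pol s a * p s a s' \<partial>A) \<partial>M)"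

definition feat_exp :: "'s measure \<Rightarrow> 'a measure \<Rightarrow> ('s \<Rightarrow> 'a \<Rightarrow> 's \<Rightarrow> real) \<Rightarrow> ('s \<Rightarrow> 'a \<Rightarrow> real)
    \<Rightarrow> ('s \<Rightarrow> real) \<Rightarrow> ('s \<Rightarrow> 'a \<Rightarrow> real ^ 'd) \<Rightarrow> nat \<Rightarrow> real ^ 'd" where
  "feat_exp M A p pol xi0 phi h =
     (\<integral>s. (\<integral>a. (sdist M A p pol xi0 h s * pol s a) *\<^sub>R phi s a \<partial>A) \<partial>M)"

definition pmin :: "('s \<Rightarrow> 'a \<Rightarrow> 's \<Rightarrow> real) \<Rightarrow> ('s \<Rightarrow> 'a) \<Rightarrow> 's \<Rightarrow> real" where
  "pmin p pib s' = (INF s. p s (pib s) s')"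

definition pmass :: "'s measure \<Rightarrow> ('s \<Rightarrow> 'a \<Rightarrow> 's \<Rightarrow> real) \<Rightarrow> ('s \<Rightarrow> 'a) \<Rightarrow> 's set \<Rightarrow> real" where
  "pmass M p pib S = (\<integral>s'. indicator S s' * pmin p pib s' \<partial>M)"

definition Delta_q :: "'s measure \<Rightarrow> ('s \<Rightarrow> 'a \<Rightarrow> 's \<Rightarrow> real) \<Rightarrow> ('s \<Rightarrow> 'a) \<Rightarrow> 's set \<Rightarrow> 's set
    \<Rightarrow> real ^ 'd \<Rightarrow> 's \<Rightarrow> real ^ 'd" where
  "Delta_q M p pib Sov Slo x s' =
     (pmin p pib s' * (pmass M p pib Slo * indicator Sov s' - pmass M p pib Sov * indicator Slo s')) *\<^sub>R x"

definition ptilde :: "'s measure \<Rightarrow> ('s \<Rightarrow> 'a \<Rightarrow> 's \<Rightarrow> real) \<Rightarrow> ('s \<Rightarrow> 'a \<Rightarrow> real ^ 'd) \<Rightarrow> ('s \<Rightarrow> 'a)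
    \<Rightarrow> 's set \<Rightarrow> 's set \<Rightarrow> real ^ 'd \<Rightarrow> 's \<Rightarrow> 'a \<Rightarrow> 's \<Rightarrow> real" where
  "ptilde M p phi pib Sov Slo x s a s' = p s a s' - phi s a \<bullet> Delta_q M p pib Sov Slo x s'"

definition is_kernel :: "'s measure \<Rightarrow> ('s \<Rightarrow> 'a \<Rightarrow> 's \<Rightarrow> real) \<Rightarrow> bool" where
  "is_kernel M p \<longleftrightarrow> (\<forall>s a. (\<forall>s'. 0 \<le> p s a s') \<and> integrable M (p s a) \<and> (\<integral>s'. p s a s' \<partial>M) = 1)"

end

theory Submission
  imports Defs
begin

text \<open>Telescoping the Bellman recursions of the two models along trajectories of the perturbed
  kernel writes the value difference as a sum over steps i of the expected one-step gap
  (p - ptilde) V, where V is the value under p with H - i remaining steps. Since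
  p - ptilde = phi^T Delta_q and Delta_q is a multiple of x, this gap factors as phi(s,a)^T x
  times the integral of pmin (p_lo 1_Sov - p_ov 1_Slo) V. With k remaining steps, V \<ge> 3k/4 on Sov
  and V \<le> k/4 on Slo make that integral at least k p_ov p_lo / 2, and as phi^T x \<ge> 0, summing
  over the steps gives the claim.\<close>

lemma integrable_mult_bounded:
  fixes f g :: "'x \<Rightarrow> real"
  assumes "integrable M f" "g \<in> borel_measurable M" "\<And>x. \<bar>g x\<bar> \<le> B"
  shows "integrable M (\<lambda>x. f x * g x)"
proof (rule Bochner_Integration.integrable_bound[where f="\<lambda>x. B * f x"])
  show "integrable M (\<lambda>x. B * f x)" using assms(1) by simp
  show "(\<lambda>x. f x * g x) \<in> borel_measurable M" using assms(1,2) by measurable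
  show "AE x in M. norm (f x * g x) \<le> norm (B * f x)"
  proof (rule AE_I2)
    fix x have "\<bar>f x\<bar> * \<bar>g x\<bar> \<le> \<bar>f x\<bar> * B" using assms(3)[of x] by (simp add: mult_left_mono)
    moreover have "0 \<le> B" using assms(3)[of x] by linarith
    ultimately show "norm (f x * g x) \<le> norm (B * f x)" by (simp add: abs_mult mult.commute)
  qed
qed

lemma integrable_scaleR_bounded:
  fixes f :: "'x \<Rightarrow> real" and g :: "'x \<Rightarrow> 'v::{banach,second_countable_topology}"
  assumes "integrable M f" "g \<in> borel_measurable M" "\<And>x. norm (g x) \<le> B"
  shows "integrable M (\<lambda>x. f x *\<^sub>R g x)"
proof (rule Bochner_Integration.integrable_bound[where f="\<lambda>x. B * f x"])
  show "integrable M (\<lambda>x. B * f x)" using assms(1) by simp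
  show "(\<lambda>x. f x *\<^sub>R g x) \<in> borel_measurable M" using assms(1,2) by measurable
  show "AE x in M. norm (f x *\<^sub>R g x) \<le> norm (B * f x)"
  proof (rule AE_I2)
    fix x have "\<bar>f x\<bar> * norm (g x) \<le> \<bar>f x\<bar> * B" using assms(3)[of x] by (simp add: mult_left_mono)
    moreover have "0 \<le> B" using assms(3)[of x] norm_ge_zero[of "g x"] by linarith
    ultimately show "norm (f x *\<^sub>R g x) \<le> norm (B * f x)" by (simp add: abs_mult mult.commute)
  qed
qed

lemma abs_integral_density_le:
  fixes w g :: "'x \<Rightarrow> real"
  assumes w_nn: "\<And>x. 0 \<le> w x" and w_int: "integrable N w" and w_one: "(\<integral>x. w x \<partial>N) = 1"
    and g: "g \<in> borel_measurable N" and g_bdd: "\<And>x. \<bar>g x\<bar> \<le> B"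
  shows "\<bar>\<integral>x. w x * g x \<partial>N\<bar> \<le> B"
proof -
  have "\<bar>\<integral>x. w x * g x \<partial>N\<bar> \<le> (\<integral>x. \<bar>w x * g x\<bar> \<partial>N)"
    using integral_norm_bound[of N "\<lambda>x. w x * g x"] by simp
  also have "\<dots> \<le> (\<integral>x. w x * B \<partial>N)"
    using integrable_abs[OF integrable_mult_bounded[OF w_int g g_bdd]] w_int w_nn g_bdd
    by (intro integral_mono) (auto simp: abs_mult mult_left_mono)
  also have "\<dots> = B" using w_one by simp
  finally show ?thesis .
qed

lemma integral_weighted_indicator_ge:
  fixes m V :: "'s \<Rightarrow> real"
  assumes m[measurable]: "m \<in> borel_measurable M" and m_nn: "\<And>s. 0 \<le> m s" and m_int: "integrable M m"
    and S[measurable]: "S1 \<in> sets M" "S2 \<in> sets M"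
    and V[measurable]: "V \<in> borel_measurable M" and V_bdd: "\<And>s. \<bar>V s\<bar> \<le> B"
    and V_up: "\<And>s. s \<in> S1 \<Longrightarrow> 3/4 * c \<le> V s" and V_lo: "\<And>s. s \<in> S2 \<Longrightarrow> V s \<le> 1/4 * c"
  defines "m1 \<equiv> \<integral>s. indicator S1 s * m s \<partial>M" and "m2 \<equiv> \<integral>s. indicator S2 s * m s \<partial>M"
  shows "c * (m1 * m2) / 2 \<le> (\<integral>s. m s * (m2 * indicator S1 s - m1 * indicator S2 s) * V s \<partial>M)"
proof -
  have m_ind_int: "integrable M (\<lambda>s. m s * indicator S s)" if "S \<in> sets M" for S
    by (rule integrable_mult_bounded[OF m_int, where B=1]) (use that in \<open>auto simp: indicator_def\<close>)
  have m_ind_V_int: "integrable M (\<lambda>s. m s * indicator S s * V s)" if "S \<in> sets M" for S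
    by (rule integrable_mult_bounded[OF m_ind_int[OF that] V V_bdd])
  have mass: "(\<integral>s. m s * indicator S s * t \<partial>M) = t * (\<integral>s. indicator S s * m s \<partial>M)" for S t
    by (simp add: mult.commute)
  define J1 where "J1 = (\<integral>s. m s * indicator S1 s * V s \<partial>M)"
  define J2 where "J2 = (\<integral>s. m s * indicator S2 s * V s \<partial>M)"
  have J1_ge: "3/4 * c * m1 \<le> J1"
  proof -
    have "(\<integral>s. m s * indicator S1 s * (3/4 * c) \<partial>M) \<le> J1"
      unfolding J1_def
    proof (rule integral_mono[OF _ m_ind_V_int[OF S(1)]])
      show "integrable M (\<lambda>s. m s * indicator S1 s * (3/4 * c))" using m_ind_int[OF S(1)] by simp
      show "m s * indicator S1 s * (3/4 * c) \<le> m s * indicator S1 s * V s" for s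
        using mult_left_mono[OF V_up m_nn] by (cases "s \<in> S1") auto
    qed
    then show ?thesis by (simp only: mass m1_def)
  qed
  have J2_le: "J2 \<le> 1/4 * c * m2"
  proof -
    have "J2 \<le> (\<integral>s. m s * indicator S2 s * (1/4 * c) \<partial>M)"
      unfolding J2_def
    proof (rule integral_mono[OF m_ind_V_int[OF S(2)]])
      show "integrable M (\<lambda>s. m s * indicator S2 s * (1/4 * c))" using m_ind_int[OF S(2)] by simp
      show "m s * indicator S2 s * V s \<le> m s * indicator S2 s * (1/4 * c)" for s
        using mult_left_mono[OF V_lo m_nn] by (cases "s \<in> S2") auto
    qed
    then show ?thesis by (simp only: mass m2_def)
  qed
  have "(\<integral>s. m s * (m2 * indicator S1 s - m1 * indicator S2 s) * V s \<partial>M)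
      = (\<integral>s. m2 * (m s * indicator S1 s * V s) - m1 * (m s * indicator S2 s * V s) \<partial>M)"
    by (simp add: algebra_simps)
  also have "\<dots> = m2 * J1 - m1 * J2"
    unfolding J1_def J2_def using m_ind_V_int[OF S(1)] m_ind_V_int[OF S(2)] by simp
  finally have split: "(\<integral>s. m s * (m2 * indicator S1 s - m1 * indicator S2 s) * V s \<partial>M) = m2 * J1 - m1 * J2" .
  have "0 \<le> m1" "0 \<le> m2"
    unfolding m1_def m2_def using m_nn by (auto intro!: integral_nonneg simp: indicator_def)
  then have "m2 * (3/4 * c * m1) \<le> m2 * J1" "m1 * J2 \<le> m1 * (1/4 * c * m2)"
    using mult_left_mono[OF J1_ge] mult_left_mono[OF J2_le] by simp_all
  then show ?thesis unfolding split by (simp add: algebra_simps)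
qed

lemma pmin_nonneg: "is_kernel M p \<Longrightarrow> 0 \<le> pmin p pib s'"
  unfolding pmin_def is_kernel_def by (auto intro!: cINF_greatest)

lemma pmin_le: "is_kernel M p \<Longrightarrow> pmin p pib s' \<le> p s (pib s) s'"
  unfolding pmin_def is_kernel_def by (intro cINF_lower) (auto simp: bdd_below_def)

lemma integrable_pmin:
  assumes p: "is_kernel M p" and "pmin p pib \<in> borel_measurable M"
  shows "integrable M (pmin p pib)"
proof (rule Bochner_Integration.integrable_bound[where f="p s (pib s)" for s])
  show "integrable M (p s (pib s))" using p by (simp add: is_kernel_def)
  show "AE s' in M. norm (pmin p pib s') \<le> norm (p s (pib s) s')"
    using pmin_nonneg[OF p] pmin_le[OF p] by (auto intro!: AE_I2 order_trans[OF _ abs_ge_self])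
qed fact

lemma kernel_gap_ptilde:
  assumes "integrable M (\<lambda>s'. p s a s' * V s')"
    and "integrable M (\<lambda>s'. ptilde M p phi pib Sov Slo x s a s' * V s')"
  shows "(\<integral>s'. p s a s' * V s' \<partial>M) - (\<integral>s'. ptilde M p phi pib Sov Slo x s a s' * V s' \<partial>M)
       = (phi s a \<bullet> x) * (\<integral>s'. pmin p pib s' * (pmass M p pib Slo * indicator Sov s'
                                  - pmass M p pib Sov * indicator Slo s') * V s' \<partial>M)"
proof -
  have "(\<integral>s'. p s a s' * V s' \<partial>M) - (\<integral>s'. ptilde M p phi pib Sov Slo x s a s' * V s' \<partial>M)
      = (\<integral>s'. p s a s' * V s' - ptilde M p phi pib Sov Slo x s a s' * V s' \<partial>M)"
    using assms by simp
  also have "\<dots> = (\<integral>s'. (phi s a \<bullet> x) * (pmin p pib s' * (pmass M p pib Slo * indicator Sov s'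
                                  - pmass M p pib Sov * indicator Slo s') * V s') \<partial>M)"
    by (rule Bochner_Integration.integral_cong) (simp_all add: ptilde_def Delta_q_def algebra_simps)
  finally show ?thesis by simp
qed

lemma Vrem_bound_of_Vfun_bound:
  assumes "\<forall>h \<in> {1..H}. \<forall>s \<in> S. P (real (H - h + 1)) (Vfun M A p r pol H h s)" and "P 0 0"
    and "k \<le> H" and "s \<in> S"
  shows "P (real k) (Vrem M A p r pol k s)"
proof (cases "k = 0")
  case False
  then have "Suc H - k \<in> {1..H}" and "H - (Suc H - k) + 1 = k"
    and "Vfun M A p r pol H (Suc H - k) s = Vrem M A p r pol k s"
    using assms(3) by (auto simp: Vfun_def Suc_diff_le)
  then show ?thesis using assms(1,4) by metis
qed (simp add: assms(2))

locale mdp_policy = M: sigma_finite_measure M + A: sigma_finite_measure A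
  for M :: "'s measure" and A :: "'a measure" and pol :: "'s \<Rightarrow> 'a \<Rightarrow> real" +
  assumes space_M: "space M = UNIV"
    and pol_meas: "(\<lambda>(s,a). pol s a) \<in> borel_measurable (M \<Otimes>\<^sub>M A)"
    and pol_nonneg: "\<And>s a. 0 \<le> pol s a" and pol_integrable: "\<And>s. integrable A (pol s)"
    and pol_integral: "\<And>s. (\<integral>a. pol s a \<partial>A) = 1"
begin

lemma pol_measurable[measurable (raw)]:
  "f \<in> measurable N M \<Longrightarrow> g \<in> measurable N A \<Longrightarrow> (\<lambda>x. pol (f x) (g x)) \<in> borel_measurable N"
  using measurable_compose[OF measurable_Pair pol_meas, of f N g] by simp

lemma policy_average_bounded:
  assumes g: "(\<lambda>x. g (fst x) (snd x)) \<in> borel_measurable (M \<Otimes>\<^sub>M A)" and g_bdd: "\<And>s a. \<bar>g s a\<bar> \<le> B"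
  shows "integrable A (\<lambda>a. pol s a * g s a)" and "\<bar>\<integral>a. pol s a * g s a \<partial>A\<bar> \<le> B"
    and "(\<lambda>s. \<integral>a. pol s a * g s a \<partial>A) \<in> borel_measurable M"
proof -
  have "g s \<in> borel_measurable A"
    using measurable_compose[OF measurable_Pair[OF measurable_const[of s] measurable_ident_sets[OF refl]] g] space_M
    by (simp add: comp_def)
  then show "integrable A (\<lambda>a. pol s a * g s a)" and "\<bar>\<integral>a. pol s a * g s a \<partial>A\<bar> \<le> B"
    by (rule integrable_mult_bounded[OF pol_integrable _ g_bdd],
        rule abs_integral_density_le[OF pol_nonneg pol_integrable pol_integral _ g_bdd])
  note [measurable] = g
  show "(\<lambda>s. \<integral>a. pol s a * g s a \<partial>A) \<in> borel_measurable M"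
    by measurable
qed

end

locale mdp_kernel = mdp_policy M A pol for M :: "'s measure" and A :: "'a measure" and pol +
  fixes q :: "'s \<Rightarrow> 'a \<Rightarrow> 's \<Rightarrow> real"
  assumes q_meas: "(\<lambda>(s, a, s'). q s a s') \<in> borel_measurable (M \<Otimes>\<^sub>M A \<Otimes>\<^sub>M M)"
    and q_kernel: "is_kernel M q"
begin

interpretation MA: pair_sigma_finite M A ..

lemma q_nonneg: "0 \<le> q s a s'" and q_integrable: "integrable M (q s a)"
  and q_integral: "(\<integral>s'. q s a s' \<partial>M) = 1"
  using q_kernel by (auto simp: is_kernel_def)

lemma q_measurable[measurable (raw)]:
  "f \<in> measurable N M \<Longrightarrow> g \<in> measurable N A \<Longrightarrow> h \<in> measurable N M \<Longrightarrow>
   (\<lambda>x. q (f x) (g x) (h x)) \<in> borel_measurable N"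
  using measurable_compose[OF measurable_Pair[OF _ measurable_Pair] q_meas, of f N g h] by simp

lemma kernel_average_bounded:
  assumes f: "f \<in> borel_measurable M" and f_bdd: "\<And>s. \<bar>f s\<bar> \<le> B"
  shows "integrable M (\<lambda>s'. q s a s' * f s')" and "\<bar>\<integral>s'. q s a s' * f s' \<partial>M\<bar> \<le> B"
    and "(\<lambda>x. \<integral>s'. q (fst x) (snd x) s' * f s' \<partial>M) \<in> borel_measurable (M \<Otimes>\<^sub>M A)"
proof -
  show "integrable M (\<lambda>s'. q s a s' * f s')" and "\<bar>\<integral>s'. q s a s' * f s' \<partial>M\<bar> \<le> B"
    by (rule integrable_mult_bounded[OF q_integrable f f_bdd],
        rule abs_integral_density_le[OF q_nonneg q_integrable q_integral f f_bdd])
  note [measurable] = f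
  show "(\<lambda>x. \<integral>s'. q (fst x) (snd x) s' * f s' \<partial>M) \<in> borel_measurable (M \<Otimes>\<^sub>M A)"
    by measurable
qed

lemma integrable_joint_density:
  assumes d[measurable]: "d \<in> borel_measurable M" and d_nn: "\<And>s. 0 \<le> d s" and d_int: "integrable M d"
  shows "integrable ((M \<Otimes>\<^sub>M A) \<Otimes>\<^sub>M M)
           (\<lambda>(z, s'). d (fst z) * pol (fst z) (snd z) * q (fst z) (snd z) s')"
proof -
  interpret NM: pair_sigma_finite "M \<Otimes>\<^sub>M A" M ..
  have dp_int: "integrable (M \<Otimes>\<^sub>M A) (\<lambda>z. d (fst z) * pol (fst z) (snd z))"
  proof (rule MA.Fubini_integrable)
    have "\<And>s. (\<integral>a. norm (d (fst (s,a)) * pol (fst (s,a)) (snd (s,a))) \<partial>A) = d s"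
      using d_nn pol_nonneg pol_integral by (simp add: abs_mult)
    then show "integrable M (\<lambda>x. \<integral>y. norm (d (fst (x,y)) * pol (fst (x,y)) (snd (x,y))) \<partial>A)"
      using d_int by simp
  qed (simp_all add: pol_integrable)
  show ?thesis
  proof (rule NM.Fubini_integrable)
    have "\<And>z. (\<integral>s'. norm (d (fst z) * pol (fst z) (snd z) * q (fst z) (snd z) s') \<partial>M)
              = d (fst z) * pol (fst z) (snd z)"
      using d_nn pol_nonneg q_nonneg q_integral by (simp add: abs_mult)
    then show "integrable (M \<Otimes>\<^sub>M A) (\<lambda>z. \<integral>s'. norm ((\<lambda>(z, s'). d (fst z) * pol (fst z) (snd z)
                 * q (fst z) (snd z) s') (z, s')) \<partial>M)"
      using dp_int by simp
  qed (simp_all add: q_integrable)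
qed

lemma integral_step_density:
  assumes d[measurable]: "d \<in> borel_measurable M" and d_nn: "\<And>s. 0 \<le> d s" and d_int: "integrable M d"
    and f[measurable]: "f \<in> borel_measurable M" and f_bdd: "\<And>s. \<bar>f s\<bar> \<le> B"
  shows "integrable M (\<lambda>s'. \<integral>s. (\<integral>a. d s * pol s a * q s a s' \<partial>A) \<partial>M)"
    and "(\<integral>s. d s * (\<integral>a. pol s a * (\<integral>s'. q s a s' * f s' \<partial>M) \<partial>A) \<partial>M)
         = (\<integral>s'. (\<integral>s. (\<integral>a. d s * pol s a * q s a s' \<partial>A) \<partial>M) * f s' \<partial>M)"
proof -
  interpret NM: pair_sigma_finite "M \<Otimes>\<^sub>M A" M ..
  define G where "G = (\<lambda>(z::'s \<times> 'a, s'::'s). d (fst z) * pol (fst z) (snd z) * q (fst z) (snd z) s')"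
  have G_int: "integrable ((M \<Otimes>\<^sub>M A) \<Otimes>\<^sub>M M) G"
    unfolding G_def by (rule integrable_joint_density[OF d d_nn d_int])
  have [measurable]: "G \<in> borel_measurable ((M \<Otimes>\<^sub>M A) \<Otimes>\<^sub>M M)" unfolding G_def by measurable
  have Gf_int: "integrable ((M \<Otimes>\<^sub>M A) \<Otimes>\<^sub>M M) (\<lambda>(z, s'). G (z, s') * f s')"
    using integrable_mult_bounded[OF G_int, of "\<lambda>x. f (snd x)" B] f_bdd by (simp add: case_prod_beta')
  have G_int': "integrable ((M \<Otimes>\<^sub>M A) \<Otimes>\<^sub>M M) (\<lambda>(z, s'). G (z, s'))"
    using G_int by (simp add: case_prod_beta')
  have ae: "AE s' in M. (\<integral>z. G (z, s') \<partial>(M \<Otimes>\<^sub>M A)) = (\<integral>s. (\<integral>a. d s * pol s a * q s a s' \<partial>A) \<partial>M)"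
    using NM.AE_integrable_snd[OF G_int']
  proof eventually_elim
    case (elim s')
    show ?case using MA.integral_fst'[OF elim] by (simp add: G_def)
  qed
  show "integrable M (\<lambda>s'. \<integral>s. (\<integral>a. d s * pol s a * q s a s' \<partial>A) \<partial>M)"
    using NM.integrable_snd[OF G_int'] _ ae by (rule integrable_cong_AE_imp) measurable
  have "(\<integral>s. d s * (\<integral>a. pol s a * (\<integral>s'. q s a s' * f s' \<partial>M) \<partial>A) \<partial>M)
      = (\<integral>s. (\<integral>a. (\<integral>s'. G ((s, a), s') * f s' \<partial>M) \<partial>A) \<partial>M)"
    by (simp add: G_def mult.assoc)
  also have "\<dots> = (\<integral>z. (\<integral>s'. G (z, s') * f s' \<partial>M) \<partial>(M \<Otimes>\<^sub>M A))"
    using MA.integral_fst'[OF NM.integrable_fst'[OF Gf_int]] by simp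
  also have "\<dots> = (\<integral>x. (\<lambda>(z, s'). G (z, s') * f s') x \<partial>((M \<Otimes>\<^sub>M A) \<Otimes>\<^sub>M M))"
    using NM.integral_fst'[OF Gf_int] by simp
  also have "\<dots> = (\<integral>s'. (\<integral>z. G (z, s') \<partial>(M \<Otimes>\<^sub>M A)) * f s' \<partial>M)"
    using NM.integral_snd[of "\<lambda>z s'. G (z, s') * f s'"] Gf_int by simp
  also have "\<dots> = (\<integral>s'. (\<integral>s. (\<integral>a. d s * pol s a * q s a s' \<partial>A) \<partial>M) * f s' \<partial>M)"
    using ae by (intro integral_cong_AE) (measurable, auto elim: eventually_mono)
  finally show "(\<integral>s. d s * (\<integral>a. pol s a * (\<integral>s'. q s a s' * f s' \<partial>M) \<partial>A) \<partial>M)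
         = (\<integral>s'. (\<integral>s. (\<integral>a. d s * pol s a * q s a s' \<partial>A) \<partial>M) * f s' \<partial>M)" .
qed

lemma Vrem_measurable_bounded:
  assumes r_meas: "(\<lambda>(s, a). r s a) \<in> borel_measurable (M \<Otimes>\<^sub>M A)" and r_bdd: "\<And>s a. \<bar>r s a\<bar> \<le> R"
  shows "Vrem M A q r pol k \<in> borel_measurable M \<and> (\<forall>s. \<bar>Vrem M A q r pol k s\<bar> \<le> real k * R)"
proof (induction k)
  case (Suc k)
  then have V[measurable]: "Vrem M A q r pol k \<in> borel_measurable M"
    and V_bdd: "\<And>s. \<bar>Vrem M A q r pol k s\<bar> \<le> real k * R" by blast+
  have [measurable]: "(\<lambda>x. r (fst x) (snd x)) \<in> borel_measurable (M \<Otimes>\<^sub>M A)"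
    using r_meas by (simp add: case_prod_beta')
  define g where "g s a = r s a + (\<integral>s'. q s a s' * Vrem M A q r pol k s' \<partial>M)" for s a
  have "(\<lambda>x. g (fst x) (snd x)) \<in> borel_measurable (M \<Otimes>\<^sub>M A)"
    unfolding g_def using kernel_average_bounded(3)[OF V V_bdd] by measurable
  moreover have "\<bar>g s a\<bar> \<le> R + real k * R" for s a
    unfolding g_def using kernel_average_bounded(2)[OF V V_bdd, of s a] r_bdd[of s a] by linarith
  moreover have "Vrem M A q r pol (Suc k) = (\<lambda>s. \<integral>a. pol s a * g s a \<partial>A)"
    by (simp add: g_def fun_eq_iff)
  ultimately show ?case using policy_average_bounded(2,3) by (simp add: algebra_simps)
qed simp

lemma sdist_measurable_nonneg_integrable:
  assumes "xi0 \<in> borel_measurable M" and "\<And>s. 0 \<le> xi0 s" and "integrable M xi0"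
  shows "sdist M A q pol xi0 h \<in> borel_measurable M \<and> (\<forall>s. 0 \<le> sdist M A q pol xi0 h s)
         \<and> integrable M (sdist M A q pol xi0 h)"
proof (induction h)
  case (Suc h)
  then have d[measurable]: "sdist M A q pol xi0 h \<in> borel_measurable M"
    and d_nn: "\<And>s. 0 \<le> sdist M A q pol xi0 h s" and d_int: "integrable M (sdist M A q pol xi0 h)"
    by blast+
  have succ: "sdist M A q pol xi0 (Suc h)
      = (\<lambda>s'. \<integral>s. (\<integral>a. sdist M A q pol xi0 h s * pol s a * q s a s' \<partial>A) \<partial>M)"
    by (rule ext) simp
  have "(\<lambda>s'. \<integral>s. (\<integral>a. sdist M A q pol xi0 h s * pol s a * q s a s' \<partial>A) \<partial>M) \<in> borel_measurable M"
    by measurable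
  moreover have "\<forall>s. 0 \<le> sdist M A q pol xi0 (Suc h) s"
    using d_nn pol_nonneg q_nonneg by (auto intro!: integral_nonneg)
  moreover have "integrable M (sdist M A q pol xi0 (Suc h))"
    unfolding succ by (rule integral_step_density(1)[OF d d_nn d_int, of "\<lambda>_. 0" 0]) simp_all
  ultimately show ?case by (simp add: succ)
qed (use assms in simp)

lemma feat_exp_inner:
  assumes sdist: "\<And>s. 0 \<le> sdist M A q pol xi0 h s" "integrable M (sdist M A q pol xi0 h)"
    "sdist M A q pol xi0 h \<in> borel_measurable M"
    and phi_meas: "(\<lambda>(s, a). phi s a) \<in> borel_measurable (M \<Otimes>\<^sub>M A)"
    and phi_bdd: "\<And>s a. norm (phi s a) \<le> B"
  shows "feat_exp M A q pol xi0 phi h \<bullet> x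
       = (\<integral>s. sdist M A q pol xi0 h s * (\<integral>a. pol s a * (phi s a \<bullet> x) \<partial>A) \<partial>M)"
proof -
  let ?d = "sdist M A q pol xi0 h"
  note [measurable] = sdist(3) phi_meas[unfolded case_prod_beta']
  define Phi where "Phi s = (\<integral>a. (?d s * pol s a) *\<^sub>R phi s a \<partial>A)" for s
  have Phi_int: "integrable A (\<lambda>a. (?d s * pol s a) *\<^sub>R phi s a)" for s
  proof (rule integrable_scaleR_bounded[OF _ _ phi_bdd])
    show "phi s \<in> borel_measurable A"
      using measurable_compose[OF measurable_Pair[OF measurable_const[of s] measurable_ident_sets[OF refl]] phi_meas]
        space_M
      by (simp add: comp_def)
  qed (simp add: pol_integrable)
  have Phi_bdd: "norm (Phi s) \<le> B * ?d s" for s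
  proof -
    have "norm (Phi s) \<le> (\<integral>a. norm ((?d s * pol s a) *\<^sub>R phi s a) \<partial>A)"
      unfolding Phi_def by (rule integral_norm_bound)
    also have "\<dots> \<le> (\<integral>a. B * (?d s * pol s a) \<partial>A)"
    proof (rule integral_mono)
      show "integrable A (\<lambda>a. norm ((?d s * pol s a) *\<^sub>R phi s a))"
        using Phi_int[of s] by (rule integrable_norm)
      show "norm ((?d s * pol s a) *\<^sub>R phi s a) \<le> B * (?d s * pol s a)" for a
        using mult_left_mono[OF phi_bdd[of s a], of "?d s * pol s a"] sdist(1)[of s] pol_nonneg[of s a]
        by (simp add: abs_mult mult_ac)
    qed (simp add: pol_integrable)
    also have "\<dots> = B * ?d s" using pol_integral by simp
    finally show ?thesis .
  qed
  have B_nn: "0 \<le> B" using phi_bdd norm_ge_zero order_trans by blast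
  have "integrable M Phi"
  proof (rule Bochner_Integration.integrable_bound[where f="\<lambda>s. B * ?d s"])
    show "integrable M (\<lambda>s. B * ?d s)" using sdist(2) by simp
    have "(\<lambda>(s, a). (?d s * pol s a) *\<^sub>R phi s a) \<in> borel_measurable (M \<Otimes>\<^sub>M A)"
      by measurable
    then show "Phi \<in> borel_measurable M"
      unfolding Phi_def by (rule A.borel_measurable_lebesgue_integral)
    show "AE s in M. norm (Phi s) \<le> norm (B * ?d s)"
      using Phi_bdd B_nn sdist(1) by (auto intro!: AE_I2 simp: abs_mult)
  qed
  then have "feat_exp M A q pol xi0 phi h \<bullet> x = (\<integral>s. Phi s \<bullet> x \<partial>M)"
    unfolding feat_exp_def Phi_def[symmetric] by (rule integral_inner_left[symmetric])
  also have "\<dots> = (\<integral>s. ?d s * (\<integral>a. pol s a * (phi s a \<bullet> x) \<partial>A) \<partial>M)"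
  proof (rule Bochner_Integration.integral_cong[OF refl])
    fix s
    have "Phi s \<bullet> x = (\<integral>a. ((?d s * pol s a) *\<^sub>R phi s a) \<bullet> x \<partial>A)"
      unfolding Phi_def by (rule integral_inner_left[symmetric]) (rule Phi_int)
    then show "Phi s \<bullet> x = ?d s * (\<integral>a. pol s a * (phi s a \<bullet> x) \<partial>A)"
      by (simp add: mult.assoc)
  qed
  finally show ?thesis .
qed

end

locale mdp_kernel_pair = P: mdp_kernel M A pol p + Q: mdp_kernel M A pol q
  for M :: "'s measure" and A :: "'a measure" and pol p q +
  fixes r :: "'s \<Rightarrow> 'a \<Rightarrow> real" and xi0 :: "'s \<Rightarrow> real" and R :: real
  assumes r_meas: "(\<lambda>(s, a). r s a) \<in> borel_measurable (M \<Otimes>\<^sub>M A)" and r_bdd: "\<And>s a. \<bar>r s a\<bar> \<le> R"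
    and xi0_meas: "xi0 \<in> borel_measurable M" and xi0_nonneg: "\<And>s. 0 \<le> xi0 s"
    and xi0_integrable: "integrable M xi0"
begin

definition kernel_gap :: "nat \<Rightarrow> 's \<Rightarrow> 'a \<Rightarrow> real" where
  "kernel_gap k s a = (\<integral>s'. p s a s' * Vrem M A p r pol k s' \<partial>M) - (\<integral>s'. q s a s' * Vrem M A p r pol k s' \<partial>M)"

lemma Vp_measurable[measurable]: "Vrem M A p r pol k \<in> borel_measurable M"
  and Vp_bounded: "\<bar>Vrem M A p r pol k s\<bar> \<le> real k * R"
  using P.Vrem_measurable_bounded[OF r_meas r_bdd] by blast+

lemma Vq_measurable[measurable]: "Vrem M A q r pol k \<in> borel_measurable M"
  and Vq_bounded: "\<bar>Vrem M A q r pol k s\<bar> \<le> real k * R"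
  using Q.Vrem_measurable_bounded[OF r_meas r_bdd] by blast+

lemma sdist_measurable[measurable]: "sdist M A q pol xi0 h \<in> borel_measurable M"
  and sdist_nonneg: "0 \<le> sdist M A q pol xi0 h s"
  and sdist_integrable: "integrable M (sdist M A q pol xi0 h)"
  using Q.sdist_measurable_nonneg_integrable[OF xi0_meas xi0_nonneg xi0_integrable] by blast+

lemma r_measurable[measurable]: "(\<lambda>x. r (fst x) (snd x)) \<in> borel_measurable (M \<Otimes>\<^sub>M A)"
  using r_meas by (simp add: case_prod_beta')

lemma kernel_gap_measurable[measurable]: "(\<lambda>x. kernel_gap k (fst x) (snd x)) \<in> borel_measurable (M \<Otimes>\<^sub>M A)"
  unfolding kernel_gap_def by measurable

lemma kernel_gap_bounded: "\<bar>kernel_gap k s a\<bar> \<le> 2 * (real k * R)"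
  unfolding kernel_gap_def
  using P.kernel_average_bounded(2)[OF Vp_measurable Vp_bounded, of s a k]
    Q.kernel_average_bounded(2)[OF Vp_measurable Vp_bounded, of s a k] by linarith

lemma Vrem_Suc_diff:
  "Vrem M A p r pol (Suc k) s - Vrem M A q r pol (Suc k) s
   = (\<integral>a. pol s a * kernel_gap k s a \<partial>A)
     + (\<integral>a. pol s a * (\<integral>s'. q s a s' * (Vrem M A p r pol k s' - Vrem M A q r pol k s') \<partial>M) \<partial>A)"
proof -
  let ?V = "Vrem M A p r pol k" and ?W = "Vrem M A q r pol k"
  define Y where "Y s a = (\<integral>s'. q s a s' * (?V s' - ?W s') \<partial>M)" for s a
  have VW_bdd: "\<bar>?V s' - ?W s'\<bar> \<le> 2 * (real k * R)" for s'
    using Vp_bounded[of k s'] Vq_bounded[of k s'] by linarith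
  have Y_eq: "Y s a = (\<integral>s'. q s a s' * ?V s' \<partial>M) - (\<integral>s'. q s a s' * ?W s' \<partial>M)" for a
    unfolding Y_def right_diff_distrib
    using Q.kernel_average_bounded(1)[OF Vp_measurable Vp_bounded] Q.kernel_average_bounded(1)[OF Vq_measurable Vq_bounded]
    by simp
  have int_p: "integrable A (\<lambda>a. pol s a * (r s a + (\<integral>s'. p s a s' * ?V s' \<partial>M)))"
    by (intro P.policy_average_bounded(1)[where B="R + real k * R"] order_trans[OF abs_triangle_ineq]
        add_mono r_bdd P.kernel_average_bounded(2)[OF Vp_measurable Vp_bounded]) measurable
  have int_q: "integrable A (\<lambda>a. pol s a * (r s a + (\<integral>s'. q s a s' * ?W s' \<partial>M)))"
    by (intro P.policy_average_bounded(1)[where B="R + real k * R"] order_trans[OF abs_triangle_ineq]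
        add_mono r_bdd Q.kernel_average_bounded(2)[OF Vq_measurable Vq_bounded]) measurable
  have int_gap: "integrable A (\<lambda>a. pol s a * kernel_gap k s a)"
    by (rule P.policy_average_bounded(1)[OF kernel_gap_measurable kernel_gap_bounded])
  have int_Y: "integrable A (\<lambda>a. pol s a * Y s a)"
    unfolding Y_def
    by (rule P.policy_average_bounded(1)[OF Q.kernel_average_bounded(3)[of _ "2 * (real k * R)"]])
       (measurable, rule VW_bdd, rule Q.kernel_average_bounded(2), measurable, rule VW_bdd)
  have "Vrem M A p r pol (Suc k) s - Vrem M A q r pol (Suc k) s
      = (\<integral>a. pol s a * (r s a + (\<integral>s'. p s a s' * ?V s' \<partial>M))
             - pol s a * (r s a + (\<integral>s'. q s a s' * ?W s' \<partial>M)) \<partial>A)"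
    using int_p int_q by simp
  also have "\<dots> = (\<integral>a. pol s a * kernel_gap k s a + pol s a * Y s a \<partial>A)"
    by (rule Bochner_Integration.integral_cong) (simp_all add: Y_eq kernel_gap_def algebra_simps)
  also have "\<dots> = (\<integral>a. pol s a * kernel_gap k s a \<partial>A) + (\<integral>a. pol s a * Y s a \<partial>A)"
    using int_gap int_Y by simp
  finally show ?thesis unfolding Y_def .
qed

lemma kernel_gap_ptilde_ge:
  assumes q: "q = ptilde M p phi pib Sov Slo x" and pmin_meas: "pmin p pib \<in> borel_measurable M"
    and sets: "Sov \<in> sets M" "Slo \<in> sets M"
    and V_up: "\<And>s. s \<in> Sov \<Longrightarrow> 3/4 * real k \<le> Vrem M A p r pol k s"
    and V_lo: "\<And>s. s \<in> Slo \<Longrightarrow> Vrem M A p r pol k s \<le> 1/4 * real k"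
    and phi_x: "0 \<le> phi s a \<bullet> x"
  shows "real k * (pmass M p pib Sov * pmass M p pib Slo / 2) * (phi s a \<bullet> x) \<le> kernel_gap k s a"
proof -
  let ?K = "\<integral>s'. pmin p pib s' * (pmass M p pib Slo * indicator Sov s'
                                  - pmass M p pib Sov * indicator Slo s') * Vrem M A p r pol k s' \<partial>M"
  have K_ge: "real k * (pmass M p pib Sov * pmass M p pib Slo / 2) \<le> ?K"
    unfolding times_divide_eq_right
    by (rule integral_weighted_indicator_ge[OF pmin_meas pmin_nonneg[OF P.q_kernel]
        integrable_pmin[OF P.q_kernel pmin_meas] sets Vp_measurable Vp_bounded V_up V_lo,
        unfolded pmass_def[symmetric]])
  have gap: "kernel_gap k s a = (phi s a \<bullet> x) * ?K"
    unfolding kernel_gap_def unfolding q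
    by (rule kernel_gap_ptilde)
      (rule P.kernel_average_bounded(1)[OF Vp_measurable Vp_bounded],
       rule Q.kernel_average_bounded(1)[OF Vp_measurable Vp_bounded, unfolded q])
  show ?thesis
    unfolding gap using mult_right_mono[OF K_ge phi_x] by (simp only: mult.commute)
qed

lemma value_gap_step:
  "(\<integral>s. sdist M A q pol xi0 h s * (Vrem M A p r pol (Suc k) s - Vrem M A q r pol (Suc k) s) \<partial>M)
   = (\<integral>s. sdist M A q pol xi0 h s * (\<integral>a. pol s a * kernel_gap k s a \<partial>A) \<partial>M)
     + (\<integral>s. sdist M A q pol xi0 (Suc h) s * (Vrem M A p r pol k s - Vrem M A q r pol k s) \<partial>M)"
proof -
  let ?d = "sdist M A q pol xi0 h" and ?f = "\<lambda>s. Vrem M A p r pol k s - Vrem M A q r pol k s"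
  have f_bdd: "\<bar>?f s\<bar> \<le> 2 * (real k * R)" for s
    using Vp_bounded[of k s] Vq_bounded[of k s] by linarith
  let ?G = "\<lambda>s. \<integral>a. pol s a * kernel_gap k s a \<partial>A"
  let ?Y = "\<lambda>s. \<integral>a. pol s a * (\<integral>s'. q s a s' * ?f s' \<partial>M) \<partial>A"
  have int_G: "integrable M (\<lambda>s. ?d s * ?G s)"
    by (rule integrable_mult_bounded[OF sdist_integrable _
          P.policy_average_bounded(2)[OF kernel_gap_measurable kernel_gap_bounded]]) measurable
  have int_Y: "integrable M (\<lambda>s. ?d s * ?Y s)"
    by (rule integrable_mult_bounded[OF sdist_integrable _
          P.policy_average_bounded(2)[OF _ Q.kernel_average_bounded(2)[OF _ f_bdd]]]) measurable
  have "(\<integral>s. ?d s * (Vrem M A p r pol (Suc k) s - Vrem M A q r pol (Suc k) s) \<partial>M)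
      = (\<integral>s. ?d s * ?G s \<partial>M) + (\<integral>s. ?d s * ?Y s \<partial>M)"
    unfolding Vrem_Suc_diff distrib_left using int_G int_Y by simp
  also have "(\<integral>s. ?d s * ?Y s \<partial>M) = (\<integral>s. sdist M A q pol xi0 (Suc h) s * ?f s \<partial>M)"
    by (simp add: Q.integral_step_density(2)[OF sdist_measurable sdist_nonneg sdist_integrable _ f_bdd])
  finally show ?thesis .
qed

lemma value_gap_telescope:
  "(\<integral>s. sdist M A q pol xi0 h s * (Vrem M A p r pol k s - Vrem M A q r pol k s) \<partial>M)
   = (\<Sum>i<k. \<integral>s. sdist M A q pol xi0 (h + i) s * (\<integral>a. pol s a * kernel_gap (k - 1 - i) s a \<partial>A) \<partial>M)"
proof (induction k arbitrary: h)
  case (Suc k)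
  show ?case
    unfolding value_gap_step Suc sum.lessThan_Suc_shift by simp
qed simp

lemma pol_value_diff:
  "pol_value M A p r pol xi0 H - pol_value M A q r pol xi0 H
   = (\<Sum>i<Suc H. \<integral>s. sdist M A q pol xi0 i s * (\<integral>a. pol s a * kernel_gap (H - i) s a \<partial>A) \<partial>M)"
proof -
  have "integrable M (\<lambda>s. xi0 s * Vrem M A p r pol (Suc H) s)"
    by (rule integrable_mult_bounded[OF xi0_integrable Vp_measurable Vp_bounded])
  moreover have "integrable M (\<lambda>s. xi0 s * Vrem M A q r pol (Suc H) s)"
    by (rule integrable_mult_bounded[OF xi0_integrable Vq_measurable Vq_bounded])
  ultimately have "pol_value M A p r pol xi0 H - pol_value M A q r pol xi0 H
      = (\<integral>s. sdist M A q pol xi0 0 s * (Vrem M A p r pol (Suc H) s - Vrem M A q r pol (Suc H) s) \<partial>M)"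
    unfolding pol_value_def Vfun_def by (simp add: right_diff_distrib)
  then show ?thesis unfolding value_gap_telescope by simp
qed

lemma pol_value_diff_ge:
  assumes f[measurable]: "(\<lambda>x. f (fst x) (snd x)) \<in> borel_measurable (M \<Otimes>\<^sub>M A)"
    and f_bdd: "\<And>s a. \<bar>f s a\<bar> \<le> F" and f_nonneg: "\<And>s a. 0 \<le> f s a"
    and gap_ge: "\<And>k s a. k \<le> H \<Longrightarrow> real k * c * f s a \<le> kernel_gap k s a"
  shows "c * (\<Sum>h<H. real (H - h) * (\<integral>s. sdist M A q pol xi0 h s * (\<integral>a. pol s a * f s a \<partial>A) \<partial>M))
         \<le> pol_value M A p r pol xi0 H - pol_value M A q r pol xi0 H"
proof -
  define F_avg where "F_avg i = (\<integral>s. sdist M A q pol xi0 i s * (\<integral>a. pol s a * f s a \<partial>A) \<partial>M)" for i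
  have term_ge: "real (H - i) * c * F_avg i
      \<le> (\<integral>s. sdist M A q pol xi0 i s * (\<integral>a. pol s a * kernel_gap (H - i) s a \<partial>A) \<partial>M)" for i
  proof -
    let ?k = "H - i" and ?d = "sdist M A q pol xi0 i"
    have kf_bdd: "\<bar>real ?k * c * f s a\<bar> \<le> \<bar>real ?k * c\<bar> * F" for s a
      using f_bdd[of s a] by (simp add: abs_mult mult_left_mono)
    have kf_meas: "(\<lambda>x. real ?k * c * f (fst x) (snd x)) \<in> borel_measurable (M \<Otimes>\<^sub>M A)"
      by measurable
    note kf_avg = P.policy_average_bounded[OF kf_meas kf_bdd]
      and gap_avg = P.policy_average_bounded[OF kernel_gap_measurable kernel_gap_bounded]
    have avg_le: "(\<integral>a. pol s a * (real ?k * c * f s a) \<partial>A) \<le> (\<integral>a. pol s a * kernel_gap ?k s a \<partial>A)" for s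
      using kf_avg(1) gap_avg(1) gap_ge[of ?k] P.pol_nonneg
      by (intro integral_mono) (auto intro: mult_left_mono)
    have inner: "(\<integral>a. pol s a * (real ?k * c * f s a) \<partial>A) = real ?k * c * (\<integral>a. pol s a * f s a \<partial>A)" for s
      by (simp add: mult.left_commute[of "pol s _"])
    have "real ?k * c * F_avg i = (\<integral>s. ?d s * (\<integral>a. pol s a * (real ?k * c * f s a) \<partial>A) \<partial>M)"
      unfolding inner F_avg_def by (simp add: mult.left_commute[of "?d _"])
    also have "\<dots> \<le> (\<integral>s. ?d s * (\<integral>a. pol s a * kernel_gap ?k s a \<partial>A) \<partial>M)"
      using integrable_mult_bounded[OF sdist_integrable kf_avg(3) kf_avg(2)]
        integrable_mult_bounded[OF sdist_integrable gap_avg(3) gap_avg(2)] avg_le sdist_nonneg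
      by (intro integral_mono) (auto intro: mult_left_mono)
    finally show ?thesis .
  qed
  have "c * (\<Sum>h<H. real (H - h) * F_avg h) = (\<Sum>i<Suc H. real (H - i) * c * F_avg i)"
    by (simp add: sum_distrib_left mult_ac)
  also have "\<dots> \<le> pol_value M A p r pol xi0 H - pol_value M A q r pol xi0 H"
    unfolding pol_value_diff by (rule sum_mono[OF term_ge])
  finally show ?thesis unfolding F_avg_def .
qed

end
theorem lemma14:
  fixes M :: "'s measure" and A :: "'a measure"
    and p :: "'s \<Rightarrow> 'a \<Rightarrow> 's \<Rightarrow> real" and r :: "'s \<Rightarrow> 'a \<Rightarrow> real"
    and pol :: "'s \<Rightarrow> 'a \<Rightarrow> real" and xi0 :: "'s \<Rightarrow> real"
    and phi :: "'s \<Rightarrow> 'a \<Rightarrow> real ^ 'd" and x :: "real ^ 'd"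
    and pib :: "'s \<Rightarrow> 'a" and Sov Slo :: "'s set" and H :: nat
  assumes M: "sigma_finite_measure M" "space M = UNIV"
    and A: "sigma_finite_measure A" "space A = UNIV"
    and p_meas: "(\<lambda>(s, a, s'). p s a s') \<in> borel_measurable (M \<Otimes>\<^sub>M A \<Otimes>\<^sub>M M)"
    and p_kernel: "is_kernel M p"
    and r_meas: "(\<lambda>(s, a). r s a) \<in> borel_measurable (M \<Otimes>\<^sub>M A)"
    and r_bdd: "\<exists>B. \<forall>s a. \<bar>r s a\<bar> \<le> B"
    and pol_meas: "(\<lambda>(s, a). pol s a) \<in> borel_measurable (M \<Otimes>\<^sub>M A)"
    and pol_dens: "\<forall>s. (\<forall>a. 0 \<le> pol s a) \<and> integrable A (pol s) \<and> (\<integral>a. pol s a \<partial>A) = 1"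
    and xi0_meas: "xi0 \<in> borel_measurable M"
    and xi0_dens: "(\<forall>s. 0 \<le> xi0 s) \<and> integrable M xi0 \<and> (\<integral>s. xi0 s \<partial>M) = 1"
    and phi_meas: "(\<lambda>(s, a). phi s a) \<in> borel_measurable (M \<Otimes>\<^sub>M A)"
    and phi_bdd: "\<exists>B. \<forall>s a. norm (phi s a) \<le> B"
    and sets: "Sov \<in> sets M" "Slo \<in> sets M" "Sov \<inter> Slo = {}"
    and pmin_meas: "pmin p pib \<in> borel_measurable M"
    and V_up: "\<forall>h \<in> {1..H}. \<forall>s \<in> Sov.
                 Vfun M A p r pol H h s \<ge> 3/4 * real (H - h + 1)"
    and V_lo: "\<forall>h \<in> {1..H}. \<forall>s \<in> Slo.
                 Vfun M A p r pol H h s \<le> 1/4 * real (H - h + 1)"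
    and phi_x: "\<forall>s a. phi s a \<bullet> x \<ge> 0"
    and pt_meas: "(\<lambda>(s, a, s'). ptilde M p phi pib Sov Slo x s a s') \<in> borel_measurable (M \<Otimes>\<^sub>M A \<Otimes>\<^sub>M M)"
    and pt_kernel: "is_kernel M (ptilde M p phi pib Sov Slo x)"
  shows "pol_value M A p r pol xi0 H - pol_value M A (ptilde M p phi pib Sov Slo x) r pol xi0 H
         \<ge> 1/2 * pmass M p pib Sov * pmass M p pib Slo *
           ((\<Sum>h<H. real (H - h) *\<^sub>R feat_exp M A (ptilde M p phi pib Sov Slo x) pol xi0 phi h) \<bullet> x)"
proof -
  obtain R where R: "\<And>s a. \<bar>r s a\<bar> \<le> R" using r_bdd by blast
  obtain Bf where Bf: "\<And>s a. norm (phi s a) \<le> Bf" using phi_bdd by blast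
  define q where "q = ptilde M p phi pib Sov Slo x"
  define c where "c = pmass M p pib Sov * pmass M p pib Slo / 2"
  have policy: "mdp_policy M A pol"
    using M A pol_meas pol_dens unfolding mdp_policy_def mdp_policy_axioms_def by auto
  interpret T: mdp_kernel_pair M A pol p q r xi0 R
    using xi0_dens
    by (intro mdp_kernel_pair.intro mdp_kernel.intro mdp_kernel_axioms.intro mdp_kernel_pair_axioms.intro
        policy p_meas p_kernel r_meas R xi0_meas) (auto simp: q_def pt_meas pt_kernel)
  have gap_ge: "real k * c * (phi s a \<bullet> x) \<le> T.kernel_gap k s a" if "k \<le> H" for k s a
    unfolding c_def
    by (rule T.kernel_gap_ptilde_ge[OF q_def pmin_meas sets(1,2)])
      (use Vrem_bound_of_Vfun_bound[where P="\<lambda>n v. 3/4 * n \<le> v", OF V_up _ that]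
           Vrem_bound_of_Vfun_bound[where P="\<lambda>n v. v \<le> 1/4 * n", OF V_lo _ that] phi_x in auto)
  have "c * (\<Sum>h<H. real (H - h) * (\<integral>s. sdist M A q pol xi0 h s * (\<integral>a. pol s a * (phi s a \<bullet> x) \<partial>A) \<partial>M))
        \<le> pol_value M A p r pol xi0 H - pol_value M A q r pol xi0 H"
  proof (rule T.pol_value_diff_ge[OF _ _ _ gap_ge])
    show "\<bar>phi s a \<bullet> x\<bar> \<le> Bf * norm x" for s a
      using Cauchy_Schwarz_ineq2[of "phi s a" x] mult_right_mono[OF Bf norm_ge_zero, of s a x] by linarith
  qed (use phi_meas phi_x in \<open>measurable, simp_all\<close>)
  then show ?thesis
    using T.Q.feat_exp_inner[OF T.sdist_nonneg T.sdist_integrable T.sdist_measurable phi_meas Bf]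
    by (simp add: q_def c_def inner_sum_left sum_distrib_left mult_ac)
qed

end
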